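(* Let $L$ be a linear order with a first element such that $L/\!\sim_\omega\;\cong 1$ and $\operatorname{cf}(L)=\omega_1$. Then $L$ is isomorphic to a suborder of $U$.
   Context: The countable condensation $\sim_\omega$ on a linear order $L$: $x\sim_\omega y$ iff the closed interval between $x$ and $y$ is countable; $L/\!\sim_\omega\;\cong 1$ means all elements of $L$ are mutually $\sim_\omega$-equivalent. $\operatorname{cf}(L)$ is the least length of a strictly increasing cofinal sequence in $L$. $U$ is the linear order $R^*+\mathbb{Q}+R$, where $R$ is obtained from $\omega_1$ by replacing each $\alpha<\omega_1$ with a point $u_\alpha$ followed by a copy of the rationals, $R^*$ is the reverse of $R$, and the middle summand is a copy of the rationals. *)

theory Defs
  imports Main "HOL-Library.Countable_Set"
begin

definition omega_equiv :: "'a::linorder \<Rightarrow> 'a \<Rightarrow> bool" where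
  "omega_equiv x y \<longleftrightarrow> countable {z. min x y \<le> z \<and> z \<le> max x y}"

text \<open>L / ~_omega is the one-point order: all elements are mutually equivalent.\<close>
definition condensation_trivial :: "'a::linorder itself \<Rightarrow> bool" where
  "condensation_trivial _ \<longleftrightarrow> (\<forall>x y::'a. omega_equiv x y)"

text \<open>A strictly increasing sequence in L is identified with its range S (a subset
  well-ordered by the order of L); its length is the order type of S.\<close>
definition cofinal :: "'a::linorder set \<Rightarrow> bool" where
  "cofinal S \<longleftrightarrow> (\<forall>x. \<exists>s\<in>S. x \<le> s)"

definition ord_on :: "'a::linorder set \<Rightarrow> 'a rel" where
  "ord_on S = {(x, y). x \<in> S \<and> y \<in> S \<and> x \<le> y}"

definition omega1 :: "nat set rel" where
  "omega1 = cardSuc natLeq"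

definition cf_is_omega1 :: "'a::linorder itself \<Rightarrow> bool" where
  "cf_is_omega1 _ \<longleftrightarrow>
     (\<exists>S::'a set. cofinal S \<and> Well_order (ord_on S) \<and> (ord_on S, omega1) \<in> ordIso) \<and>
     (\<forall>S::'a set. cofinal S \<and> Well_order (ord_on S) \<longrightarrow> (omega1, ord_on S) \<in> ordLeq)"

text \<open>R: each alpha < omega_1 replaced by a point u_alpha = (alpha, None)
  followed by a copy of the rationals (alpha, Some q).\<close>
type_synonym Relt = "nat set \<times> rat option"

definition R_carrier :: "Relt set" where
  "R_carrier = {(a, p). a \<in> Field omega1}"

fun opt_less :: "rat option \<Rightarrow> rat option \<Rightarrow> bool" where
  "opt_less None (Some _) = True"
| "opt_less (Some p) (Some q) = (p < q)"
| "opt_less _ _ = False"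

definition R_less :: "Relt \<Rightarrow> Relt \<Rightarrow> bool" where
  "R_less x y \<longleftrightarrow>
     ((fst x, fst y) \<in> omega1 \<and> fst x \<noteq> fst y) \<or>
     (fst x = fst y \<and> opt_less (snd x) (snd y))"

text \<open>Elements of U: Inl r (r in R*, reversed R), Inr (Inl q) (middle rationals),
  Inr (Inr r) (r in R).\<close>
type_synonym Uelt = "Relt + rat + Relt"

definition U_carrier :: "Uelt set" where
  "U_carrier = Inl ` R_carrier \<union> range (\<lambda>q. Inr (Inl q)) \<union> (\<lambda>r. Inr (Inr r)) ` R_carrier"

fun U_less :: "Uelt \<Rightarrow> Uelt \<Rightarrow> bool" where
  "U_less (Inl x) (Inl y) = R_less y x"
| "U_less (Inl _) (Inr _) = True"
| "U_less (Inr (Inl p)) (Inr (Inl q)) = (p < q)"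
| "U_less (Inr (Inl _)) (Inr (Inr _)) = True"
| "U_less (Inr (Inr x)) (Inr (Inr y)) = R_less x y"
| "U_less _ _ = False"

definition embeds_into_U :: "'a::linorder itself \<Rightarrow> bool" where
  "embeds_into_U _ \<longleftrightarrow>
     (\<exists>f::'a \<Rightarrow> Uelt. f ` UNIV \<subseteq> U_carrier \<and> (\<forall>x y. x < y \<longleftrightarrow> U_less (f x) (f y)))"

end

theory Submission
  imports Defs
begin

text \<open>Fix a cofinal \<open>S \<subseteq> L\<close> of order type \<open>\<omega>\<^sub>1\<close> and send \<open>x\<close> to the least \<open>s \<in> S\<close>
  with \<open>x \<le> s\<close>. Because \<open>L\<close> has a first element and a trivial countable condensation,
  every initial segment \<open>{..s}\<close> is countable and hence embeds into \<open>\<rat>\<close>. Pairing the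
  position of \<open>s\<close> in \<open>\<omega>\<^sub>1\<close> with the rational label of \<open>x\<close> in \<open>{..s}\<close> embeds \<open>L\<close>
  lexicographically into the summand \<open>R\<close> of \<open>U\<close>.\<close>

definition rat_between :: "rat set \<Rightarrow> rat set \<Rightarrow> rat" where
  "rat_between lo up =
     (if lo = {} then (if up = {} then 0 else Min up - 1)
      else if up = {} then Max lo + 1 else (Max lo + Min up) / 2)"

lemma rat_between_bounds:
  assumes "finite lo" "finite up" "\<forall>a\<in>lo. \<forall>b\<in>up. a < b"
  shows "\<forall>a\<in>lo. a < rat_between lo up" and "\<forall>b\<in>up. rat_between lo up < b"
proof -
  have gap: "Max lo < Min up" if "lo \<noteq> {}" "up \<noteq> {}"
    using assms that by simp
  show "\<forall>a\<in>lo. a < rat_between lo up"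
  proof
    fix a assume "a \<in> lo"
    then have "lo \<noteq> {}" "a \<le> Max lo"
      using assms(1) by auto
    then show "a < rat_between lo up"
      using gap by (cases "up = {}") (simp_all add: rat_between_def field_simps)
  qed
  show "\<forall>b\<in>up. rat_between lo up < b"
  proof
    fix b assume "b \<in> up"
    then have "up \<noteq> {}" "Min up \<le> b"
      using assms(2) by auto
    then show "rat_between lo up < b"
      using gap by (cases "lo = {}") (simp_all add: rat_between_def field_simps)
  qed
qed

declare image_cong [fundef_cong]

function greedy_rat_label :: "(nat \<Rightarrow> 'a::linorder) \<Rightarrow> nat \<Rightarrow> rat" where
  "greedy_rat_label e n =
     rat_between (greedy_rat_label e ` {m. m < n \<and> e m < e n})
                 (greedy_rat_label e ` {m. m < n \<and> e n < e m})"
  by auto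
termination by (relation "measure snd") auto

declare greedy_rat_label.simps [simp del]

lemma greedy_rat_label_less:
  "e m < e m' \<Longrightarrow> greedy_rat_label e m < greedy_rat_label e m'"
proof (induction "max m m'" arbitrary: m m' rule: less_induct)
  case less
  let ?lab = "greedy_rat_label e"
  let ?lo = "\<lambda>n. ?lab ` {k. k < n \<and> e k < e n}" and ?up = "\<lambda>n. ?lab ` {k. k < n \<and> e n < e k}"
  have bounds: "\<forall>a\<in>?lo n. a < ?lab n" "\<forall>b\<in>?up n. ?lab n < b" if "n \<le> max m m'" for n
  proof -
    have "\<forall>a\<in>?lo n. \<forall>b\<in>?up n. a < b"
      using that less.hyps by fastforce
    then show "\<forall>a\<in>?lo n. a < ?lab n" "\<forall>b\<in>?up n. ?lab n < b"
      using rat_between_bounds[of "?lo n" "?up n"] greedy_rat_label.simps[of e n] by simp_all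
  qed
  have "m \<noteq> m'"
    using less.prems by blast
  then consider "m < m'" | "m' < m"
    by linarith
  then show ?case
    using bounds[of m] bounds[of m'] less.prems by cases auto
qed

lemma countable_strict_mono_on_rat:
  fixes A :: "'a::linorder set"
  assumes "countable A"
  shows "\<exists>q::'a \<Rightarrow> rat. strict_mono_on A q"
proof
  show "strict_mono_on A (\<lambda>x. greedy_rat_label (from_nat_into A) (to_nat_on A x))"
    using assms by (intro strict_mono_onI greedy_rat_label_less) simp
qed

lemma countable_atMost_if_condensation_trivial:
  fixes x0 s :: "'a::linorder"
  assumes "\<forall>y. x0 \<le> y" and "condensation_trivial TYPE('a)"
  shows "countable {..s}"
proof -
  have "countable {z. min x0 s \<le> z \<and> z \<le> max x0 s}"
    using assms(2) unfolding condensation_trivial_def omega_equiv_def by blast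
  moreover have "{z. min x0 s \<le> z \<and> z \<le> max x0 s} = {..s}"
    using assms(1) by (auto simp: min_def max_def)
  ultimately show ?thesis
    by simp
qed

lemma Field_ord_on [simp]: "Field (ord_on S) = S"
  unfolding ord_on_def Field_def by auto

definition least_above :: "'a::linorder set \<Rightarrow> 'a \<Rightarrow> 'a" where
  "least_above S x = wo_rel.minim (ord_on S) {s \<in> S. x \<le> s}"

lemma least_above:
  assumes "cofinal S" and "Well_order (ord_on S)"
  shows "least_above S x \<in> S" and "x \<le> least_above S x"
    and "t \<in> S \<Longrightarrow> x \<le> t \<Longrightarrow> least_above S x \<le> t"
proof -
  interpret wo_rel "ord_on S"
    using assms(2) by (simp add: wo_rel_def)
  have "{s \<in> S. x \<le> s} \<noteq> {}"
    using assms(1) by (auto simp: cofinal_def)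
  then show "least_above S x \<in> S" and "x \<le> least_above S x"
    using minim_in[of "{s \<in> S. x \<le> s}"] by (auto simp: least_above_def)
  show "least_above S x \<le> t" if "t \<in> S" "x \<le> t"
  proof -
    have "(least_above S x, t) \<in> ord_on S"
      using minim_least[of "{s \<in> S. x \<le> s}" t] that by (simp add: least_above_def)
    then show ?thesis
      by (simp add: ord_on_def)
  qed
qed

lemma least_above_mono:
  assumes "cofinal S" and "Well_order (ord_on S)" and "x \<le> y"
  shows "least_above S x \<le> least_above S y"
  using least_above[OF assms(1,2)] assms(3) by (meson order_trans)

lemma antisym_omega1: "antisym omega1"
  using cardSuc_Well_order[OF natLeq_Card_order]
  unfolding omega1_def well_order_on_def linear_order_on_def partial_order_on_def by blast

lemma R_less_asym: "R_less a b \<Longrightarrow> \<not> R_less b a"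
  using antisym_omega1 unfolding R_less_def antisym_def
  by (cases "snd a"; cases "snd b") auto

lemma R_less_iso_ord_on:
  assumes "iso (ord_on S) omega1 \<phi>" and "s \<in> S" "t \<in> S" "s < t"
  shows "R_less (\<phi> s, p) (\<phi> t, q)"
proof -
  have inj: "inj_on \<phi> S" and mono: "\<forall>a\<in>S. \<forall>b\<in>S. a \<le> b \<longleftrightarrow> (\<phi> a, \<phi> b) \<in> omega1"
    using assms(1) unfolding iso_iff2 Field_ord_on by (auto simp: ord_on_def bij_betw_def)
  have "\<phi> s \<noteq> \<phi> t"
    using inj_on_eq_iff[OF inj assms(2,3)] assms(4) by simp
  moreover have "(\<phi> s, \<phi> t) \<in> omega1"
    using mono assms(2-4) by (meson less_imp_le)
  ultimately show ?thesis
    by (simp add: R_less_def)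
qed

lemma strict_mono_iff_of_asym:
  assumes "\<And>x y. x < y \<Longrightarrow> r (f x) (f y)" and "\<And>a b. r a b \<Longrightarrow> \<not> r b a"
  shows "x < y \<longleftrightarrow> r (f x) (f (y::'a::linorder))"
  using assms by (metis neq_iff)

lemma R_less_least_above_label:
  assumes S: "cofinal S" "Well_order (ord_on S)" and \<phi>: "iso (ord_on S) omega1 \<phi>"
    and Q: "\<And>s. strict_mono_on {..s} (Q s)" and "x < y"
  shows "R_less (\<phi> (least_above S x), Some (Q (least_above S x) x))
                (\<phi> (least_above S y), Some (Q (least_above S y) y))"
proof (cases "least_above S x = least_above S y")
  case True
  moreover have "x \<le> least_above S y" "y \<le> least_above S y"
    using least_above(2)[OF S, of x] least_above(2)[OF S, of y] True by simp_all
  ultimately show ?thesis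
    using strict_mono_onD[OF Q] \<open>x < y\<close> by (simp add: R_less_def)
next
  case False
  then show ?thesis
    using R_less_iso_ord_on[OF \<phi>] least_above(1)[OF S] least_above_mono[OF S] \<open>x < y\<close>
    by (simp add: order_less_le)
qed

theorem proposition3p13:
  fixes x0 :: "'a::linorder"
  assumes first: "\<forall>y::'a. x0 \<le> y"
    and cond: "condensation_trivial TYPE('a)"
    and cf: "cf_is_omega1 TYPE('a)"
  shows "embeds_into_U TYPE('a)"
proof -
  obtain S :: "'a set" and \<phi> where S: "cofinal S" "Well_order (ord_on S)"
    and \<phi>: "iso (ord_on S) omega1 \<phi>"
    using cf unfolding cf_is_omega1_def ordIso_def by blast
  obtain Q :: "'a \<Rightarrow> 'a \<Rightarrow> rat" where Q: "\<And>s. strict_mono_on {..s} (Q s)"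
    using countable_strict_mono_on_rat[OF countable_atMost_if_condensation_trivial[OF first cond]]
    by metis
  define f :: "'a \<Rightarrow> Uelt"
    where "f x = Inr (Inr (\<phi> (least_above S x), Some (Q (least_above S x) x)))" for x
  have "x < y \<longleftrightarrow> U_less (f x) (f y)" for x y
    using R_less_least_above_label[OF S \<phi> Q]
    by (intro strict_mono_iff_of_asym) (auto simp: f_def R_less_asym)
  moreover have "range f \<subseteq> U_carrier"
    using \<phi> least_above(1)[OF S] bij_betw_apply
    unfolding U_carrier_def R_carrier_def f_def iso_def by fastforce
  ultimately show ?thesis
    unfolding embeds_into_U_def by blast
qed

end
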